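(* Let $\langle A,\to\rangle$ be a conditional algebra that also satisfies $(a\to c)\wedge(b\to c)\le(a\vee b)\to c$ for all $a,b,c$. Let $F,H$ be filters of $A$ with $F\neq A$, and let $u$ be an ultrafilter. If $D^{\to}_H(F)\subseteq u$, then there exists an ultrafilter $v$ with $F\subseteq v$ and $D^{\to}_H(v)\subseteq u$.
   Context: A conditional algebra is $\langle A,\to\rangle$ with $A$ a Boolean algebra and $\to$ binary with $a\to1=1$, $(a\to b)\wedge(a\to c)=a\to(b\wedge c)$, $(a\vee b)\to c\le(a\to c)\wedge(b\to c)$. Filters include the improper filter $A$. For $X,Y\subseteq A$, $D^{\to}_X(Y)=\{b\in A:\exists a\in Y,\ a\to b\in X\}$. *)

theory Defs
  imports Main
begin

definition conditional_algebra :: "('a::boolean_algebra \<Rightarrow> 'a \<Rightarrow> 'a) \<Rightarrow> bool" where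
  "conditional_algebra imp \<longleftrightarrow>
     (\<forall>a. imp a top = top) \<and>
     (\<forall>a b c. inf (imp a b) (imp a c) = imp a (inf b c)) \<and>
     (\<forall>a b c. imp (sup a b) c \<le> inf (imp a c) (imp b c))"

definition is_filter :: "'a::boolean_algebra set \<Rightarrow> bool" where
  "is_filter F \<longleftrightarrow> top \<in> F \<and>
     (\<forall>a b. a \<in> F \<longrightarrow> a \<le> b \<longrightarrow> b \<in> F) \<and>
     (\<forall>a b. a \<in> F \<longrightarrow> b \<in> F \<longrightarrow> inf a b \<in> F)"

definition is_ultrafilter :: "'a::boolean_algebra set \<Rightarrow> bool" where
  "is_ultrafilter U \<longleftrightarrow> is_filter U \<and> U \<noteq> UNIV \<and>
     (\<forall>G. is_filter G \<longrightarrow> U \<subseteq> G \<longrightarrow> G = U \<or> G = UNIV)"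

definition D_imp :: "('a \<Rightarrow> 'a \<Rightarrow> 'a) \<Rightarrow> 'a set \<Rightarrow> 'a set \<Rightarrow> 'a set" where
  "D_imp imp X Y = {b. \<exists>a\<in>Y. imp a b \<in> X}"

end

theory Submission
  imports Defs
begin

text \<open>The elements a with a \<rightarrow> b \<in> H for some b \<notin> u are exactly those an ultrafilter v must
avoid to have D_H(v) \<subseteq> u. Together with \<bottom> they form an ideal: downward closure needs only
that \<rightarrow> is antitone in its first argument, closure under joins needs the extra axiom and the
primeness of u. The prime filter theorem then separates F from this ideal by an ultrafilter,
obtained by Zorn's lemma as a maximal filter disjoint from the ideal.\<close>

lemma imp_mono_right:
  assumes "conditional_algebra imp" and "b \<le> c"
  shows "imp a b \<le> imp a c"
proof -
  have "inf (imp a b) (imp a c) = imp a (inf b c)"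
    using assms(1) unfolding conditional_algebra_def by blast
  also have "inf b c = b" using assms(2) by (rule inf_absorb1)
  finally show ?thesis by (metis inf.orderI)
qed

lemma imp_antimono_left:
  assumes "conditional_algebra imp" and "a' \<le> a"
  shows "imp a c \<le> imp a' c"
proof -
  have "imp (sup a a') c \<le> inf (imp a c) (imp a' c)"
    using assms(1) unfolding conditional_algebra_def by blast
  moreover have "sup a a' = a" using assms(2) by (rule sup_absorb1)
  ultimately show ?thesis by simp
qed

lemma filter_top: "is_filter F \<Longrightarrow> top \<in> F"
  unfolding is_filter_def by blast

lemma filter_upward: "is_filter F \<Longrightarrow> a \<in> F \<Longrightarrow> a \<le> b \<Longrightarrow> b \<in> F"
  unfolding is_filter_def by blast

lemma filter_inf: "is_filter F \<Longrightarrow> a \<in> F \<Longrightarrow> b \<in> F \<Longrightarrow> inf a b \<in> F"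
  unfolding is_filter_def by blast

lemma filter_eq_UNIV_iff_bot: "is_filter F \<Longrightarrow> F = UNIV \<longleftrightarrow> bot \<in> F"
  using filter_upward[of F bot] by auto

lemma filter_Union_chain:
  assumes "C \<noteq> {}" and "subset.chain {G. is_filter G} C"
  shows "is_filter (\<Union>C)"
proof -
  have filters: "\<And>G. G \<in> C \<Longrightarrow> is_filter G"
    and linear: "\<And>G G'. G \<in> C \<Longrightarrow> G' \<in> C \<Longrightarrow> G \<subseteq> G' \<or> G' \<subseteq> G"
    using assms(2) unfolding subset_chain_def by auto
  show ?thesis
    unfolding is_filter_def
  proof (intro conjI allI impI)
    show "top \<in> \<Union>C" using assms(1) filters filter_top by blast
  next
    fix a b assume "a \<in> \<Union>C" "a \<le> b"
    then show "b \<in> \<Union>C" using filters filter_upward by blast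
  next
    fix a b assume "a \<in> \<Union>C" "b \<in> \<Union>C"
    then obtain G G' where "G \<in> C" "G' \<in> C" "a \<in> G" "b \<in> G'" by blast
    with linear[of G G'] filters show "inf a b \<in> \<Union>C"
      by (metis UnionI filter_inf subsetD)
  qed
qed

definition filter_adjoin :: "'a::boolean_algebra set \<Rightarrow> 'a \<Rightarrow> 'a set" where
  "filter_adjoin F x = {y. \<exists>m\<in>F. inf m x \<le> y}"

lemma filter_filter_adjoin:
  assumes "is_filter F"
  shows "is_filter (filter_adjoin F x)"
  unfolding is_filter_def filter_adjoin_def
proof (intro conjI allI impI)
  show "top \<in> {y. \<exists>m\<in>F. inf m x \<le> y}" using filter_top[OF assms] by auto
next
  fix a b assume "a \<in> {y. \<exists>m\<in>F. inf m x \<le> y}" "a \<le> b"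
  then show "b \<in> {y. \<exists>m\<in>F. inf m x \<le> y}" using order_trans by blast
next
  fix a b assume "a \<in> {y. \<exists>m\<in>F. inf m x \<le> y}" "b \<in> {y. \<exists>m\<in>F. inf m x \<le> y}"
  then obtain m m' where "m \<in> F" "m' \<in> F" "inf m x \<le> a" "inf m' x \<le> b" by auto
  moreover have "inf (inf m m') x \<le> inf m x" and "inf (inf m m') x \<le> inf m' x"
    by (meson inf_le1 inf_le2 inf_mono order_refl)+
  ultimately have "inf (inf m m') x \<le> inf a b"
    by (meson le_inf_iff order_trans)
  moreover have "inf m m' \<in> F" using filter_inf[OF assms] \<open>m \<in> F\<close> \<open>m' \<in> F\<close> .
  ultimately show "inf a b \<in> {y. \<exists>m\<in>F. inf m x \<le> y}" by blast
qed

lemma subset_filter_adjoin: "F \<subseteq> filter_adjoin F x"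
  unfolding filter_adjoin_def by (auto intro: le_infI1)

lemma mem_filter_adjoin: "is_filter F \<Longrightarrow> x \<in> filter_adjoin F x"
  unfolding filter_adjoin_def using filter_top by fastforce

lemma ultrafilter_mem_or_compl:
  assumes "is_ultrafilter u"
  shows "x \<in> u \<or> - x \<in> u"
proof (cases "x \<in> u")
  case False
  have u: "is_filter u" using assms unfolding is_ultrafilter_def by blast
  then have "filter_adjoin u x = UNIV"
    using assms False filter_filter_adjoin subset_filter_adjoin mem_filter_adjoin
    unfolding is_ultrafilter_def by metis
  then obtain m where "m \<in> u" "inf m x \<le> bot"
    unfolding filter_adjoin_def by blast
  then have "m \<le> - x" by (simp add: bot_unique inf_shunt)
  with \<open>m \<in> u\<close> show ?thesis using filter_upward[OF u] by blast
qed simp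

lemma ultrafilter_prime:
  assumes "is_ultrafilter u" and "sup a b \<in> u"
  shows "a \<in> u \<or> b \<in> u"
proof (cases "a \<in> u")
  case False
  have u: "is_filter u" using assms(1) unfolding is_ultrafilter_def by blast
  have "- a \<in> u" using ultrafilter_mem_or_compl[OF assms(1)] False by blast
  then have "inf (- a) (sup a b) \<in> u" using filter_inf[OF u] assms(2) by blast
  moreover have "inf (- a) (sup a b) \<le> b" by (simp add: inf_sup_distrib1)
  ultimately show ?thesis using filter_upward[OF u] by blast
qed simp

lemma ultrafilterI:
  assumes "is_filter M" and "bot \<notin> M" and "\<And>x. x \<in> M \<or> - x \<in> M"
  shows "is_ultrafilter M"
  unfolding is_ultrafilter_def
proof (intro conjI allI impI)
  show "M \<noteq> UNIV" using assms(2) by blast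
next
  fix G assume G: "is_filter G" "M \<subseteq> G"
  show "G = M \<or> G = UNIV"
  proof (cases "G \<subseteq> M")
    case False
    then obtain g where "g \<in> G" "- g \<in> G" using assms(3) G(2) by blast
    then have "bot \<in> G" using filter_inf[OF G(1)] by fastforce
    then show ?thesis using filter_eq_UNIV_iff_bot[OF G(1)] by blast
  qed (use G in blast)
qed (use assms in blast)

definition is_ideal :: "'a::boolean_algebra set \<Rightarrow> bool" where
  "is_ideal I \<longleftrightarrow> bot \<in> I \<and>
     (\<forall>a b. a \<in> I \<longrightarrow> b \<le> a \<longrightarrow> b \<in> I) \<and>
     (\<forall>a b. a \<in> I \<longrightarrow> b \<in> I \<longrightarrow> sup a b \<in> I)"

lemma maximal_filter_disjoint_ideal_mem_or_compl:
  assumes I: "is_ideal I" and M: "is_filter M" "M \<inter> I = {}"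
    and maximal: "\<And>G. is_filter G \<Longrightarrow> M \<subseteq> G \<Longrightarrow> G \<inter> I = {} \<Longrightarrow> G = M"
  shows "x \<in> M \<or> - x \<in> M"
proof (rule ccontr)
  assume "\<not> (x \<in> M \<or> - x \<in> M)"
  have meets: "\<exists>m\<in>M. \<exists>i\<in>I. inf m y \<le> i" if "y \<notin> M" for y
  proof -
    have "filter_adjoin M y \<noteq> M" using mem_filter_adjoin[OF M(1)] that by blast
    then have "filter_adjoin M y \<inter> I \<noteq> {}"
      using maximal filter_filter_adjoin[OF M(1)] subset_filter_adjoin by blast
    then show ?thesis unfolding filter_adjoin_def by blast
  qed
  obtain m i where "m \<in> M" "i \<in> I" "inf m x \<le> i"
    using meets \<open>\<not> (x \<in> M \<or> - x \<in> M)\<close> by blast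
  moreover obtain m' i' where "m' \<in> M" "i' \<in> I" "inf m' (- x) \<le> i'"
    using meets \<open>\<not> (x \<in> M \<or> - x \<in> M)\<close> by blast
  ultimately have "inf m m' \<in> M" and "sup i i' \<in> I"
    using filter_inf[OF M(1)] I unfolding is_ideal_def by blast+
  have "inf m m' = sup (inf (inf m m') x) (inf (inf m m') (- x))"
    by (metis inf_sup_distrib1 inf_top_right sup_compl_top)
  also have "\<dots> \<le> sup i i'"
    using \<open>inf m x \<le> i\<close> \<open>inf m' (- x) \<le> i'\<close>
    by (meson inf_le1 inf_le2 le_infE sup.mono order_trans le_infI)
  finally have "inf m m' \<in> I" using I \<open>sup i i' \<in> I\<close> unfolding is_ideal_def by blast
  with \<open>inf m m' \<in> M\<close> M(2) show False by blast
qed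

theorem prime_filter_theorem:
  assumes "is_filter F" and "is_ideal I" and "F \<inter> I = {}"
  shows "\<exists>v. is_ultrafilter v \<and> F \<subseteq> v \<and> v \<inter> I = {}"
proof -
  define A where "A = {G. is_filter G \<and> F \<subseteq> G \<and> G \<inter> I = {}}"
  have "\<exists>U\<in>A. \<forall>G\<in>C. G \<subseteq> U" if "C \<in> chains A" for C
  proof (cases "C = {}")
    case True
    then show ?thesis using assms unfolding A_def by blast
  next
    case False
    have "C \<subseteq> A" and "subset.chain {G. is_filter G} C"
      using that unfolding chains_def chain_subset_def subset_chain_def A_def by auto
    have "is_filter (\<Union>C)"
      using False \<open>subset.chain {G. is_filter G} C\<close> by (rule filter_Union_chain)
    moreover have "F \<subseteq> \<Union>C" and "\<Union>C \<inter> I = {}"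
      using False \<open>C \<subseteq> A\<close> unfolding A_def by auto
    ultimately have "\<Union>C \<in> A" unfolding A_def by blast
    then show ?thesis by blast
  qed
  then obtain M where "M \<in> A" and maximal: "\<forall>G\<in>A. M \<subseteq> G \<longrightarrow> G = M"
    using Zorn_Lemma2[of A] by blast
  then have M: "is_filter M" "F \<subseteq> M" "M \<inter> I = {}" unfolding A_def by auto
  have "G = M" if "is_filter G" "M \<subseteq> G" "G \<inter> I = {}" for G
    using maximal that M(2) unfolding A_def by blast
  then have "x \<in> M \<or> - x \<in> M" for x
    by (rule maximal_filter_disjoint_ideal_mem_or_compl[OF assms(2) M(1,3)])
  moreover have "bot \<notin> M" using M(3) assms(2) unfolding is_ideal_def by blast
  ultimately have "is_ultrafilter M" using ultrafilterI[OF M(1)] by blast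
  with M show ?thesis by blast
qed

definition D_imp_obstruction :: "('a \<Rightarrow> 'a \<Rightarrow> 'a) \<Rightarrow> 'a set \<Rightarrow> 'a set \<Rightarrow> 'a set" where
  "D_imp_obstruction imp H u = {a. \<exists>b. b \<notin> u \<and> imp a b \<in> H}"

lemma D_imp_subset_iff_disjoint:
  "D_imp imp H v \<subseteq> u \<longleftrightarrow> v \<inter> D_imp_obstruction imp H u = {}"
  unfolding D_imp_def D_imp_obstruction_def by blast

lemma ideal_insert_bot_D_imp_obstruction:
  assumes ca: "conditional_algebra imp"
    and join: "\<forall>a b c. inf (imp a c) (imp b c) \<le> imp (sup a b) c"
    and H: "is_filter H" and u: "is_ultrafilter u"
  shows "is_ideal (insert bot (D_imp_obstruction imp H u))"
proof -
  let ?O = "D_imp_obstruction imp H u"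
  have down: "a' \<in> ?O" if "a \<in> ?O" and "a' \<le> a" for a a'
  proof -
    obtain b where "b \<notin> u" and "imp a b \<in> H"
      using \<open>a \<in> ?O\<close> unfolding D_imp_obstruction_def by blast
    moreover have "imp a b \<le> imp a' b" using imp_antimono_left[OF ca \<open>a' \<le> a\<close>] .
    ultimately show ?thesis
      using filter_upward[OF H] unfolding D_imp_obstruction_def by blast
  qed
  have join_closed: "sup a a' \<in> ?O" if "a \<in> ?O" and "a' \<in> ?O" for a a'
  proof -
    obtain b b' where "b \<notin> u" "imp a b \<in> H" "b' \<notin> u" "imp a' b' \<in> H"
      using \<open>a \<in> ?O\<close> \<open>a' \<in> ?O\<close> unfolding D_imp_obstruction_def by blast
    have "sup b b' \<notin> u" using ultrafilter_prime[OF u] \<open>b \<notin> u\<close> \<open>b' \<notin> u\<close> by blast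
    have "imp a (sup b b') \<in> H"
      using filter_upward[OF H \<open>imp a b \<in> H\<close> imp_mono_right[OF ca sup_ge1]] .
    moreover have "imp a' (sup b b') \<in> H"
      using filter_upward[OF H \<open>imp a' b' \<in> H\<close> imp_mono_right[OF ca sup_ge2]] .
    ultimately have "inf (imp a (sup b b')) (imp a' (sup b b')) \<in> H"
      by (rule filter_inf[OF H])
    then have "imp (sup a a') (sup b b') \<in> H"
      using filter_upward[OF H] join by blast
    with \<open>sup b b' \<notin> u\<close> show ?thesis unfolding D_imp_obstruction_def by blast
  qed
  show ?thesis
    unfolding is_ideal_def
  proof (intro conjI allI impI)
    fix a a' assume "a \<in> insert bot ?O" and "a' \<le> a"
    then show "a' \<in> insert bot ?O" using down bot_unique by blast
  next
    fix a a' assume "a \<in> insert bot ?O" and "a' \<in> insert bot ?O"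
    then show "sup a a' \<in> insert bot ?O" using join_closed by auto
  qed simp
qed

theorem lemma9p2:
  fixes imp :: "'a::boolean_algebra \<Rightarrow> 'a \<Rightarrow> 'a"
    and F H u :: "'a set"
  assumes "conditional_algebra imp"
    and "\<forall>a b c. inf (imp a c) (imp b c) \<le> imp (sup a b) c"
    and "is_filter F" and "is_filter H" and "F \<noteq> UNIV"
    and "is_ultrafilter u"
    and "D_imp imp H F \<subseteq> u"
  shows "\<exists>v. is_ultrafilter v \<and> F \<subseteq> v \<and> D_imp imp H v \<subseteq> u"
proof -
  let ?J = "insert bot (D_imp_obstruction imp H u)"
  have "bot \<notin> F" using filter_eq_UNIV_iff_bot[OF assms(3)] assms(5) by blast
  then have "F \<inter> ?J = {}" using assms(7) unfolding D_imp_subset_iff_disjoint by blast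
  moreover have "is_ideal ?J"
    using assms(1,2,4,6) by (rule ideal_insert_bot_D_imp_obstruction)
  ultimately obtain v where "is_ultrafilter v" "F \<subseteq> v" "v \<inter> ?J = {}"
    using prime_filter_theorem[OF assms(3)] by blast
  then show ?thesis unfolding D_imp_subset_iff_disjoint by blast
qed

end
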